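(* Let $N\ge 1$. (a) Let $D^1_N,\ldots,D^N_N\in\mathbb{R}^{3^N}$ be the semi-lexicographic perturbation columns defined in the context. Then the $N\times N$ matrix $M_N$ with $(i,j)$ entry $(D^i_N)^\top D^j_N$ satisfies $M_N = 2\times 3^N\, I_N$, where $I_N$ is the $N\times N$ identity matrix. (b) Let $D^1_N,\ldots,D^N_N\in\mathbb{R}^N$ be the columns of an $N\times N$ permutation matrix. Then the $N\times N$ matrix $M_N$ with $(i,j)$ entry $(D^i_N)^\top D^j_N$ satisfies $M_N = I_N$.
   Context: Semi-lexicographic perturbation columns: set $D^1_1 = (-1,-1,2)^\top\in\mathbb{R}^3$. Given $D^1_k,\ldots,D^k_k\in\mathbb{R}^{3^k}$, define $D^1_{k+1},\ldots,D^{k+1}_{k+1}\in\mathbb{R}^{3^{k+1}}$ by: $D^1_{k+1}$ has its first $2\times 3^k$ entries equal to $-1$ and its remaining $3^k$ entries equal to $2$; and for $i=2,\ldots,k+1$, $D^i_{k+1}$ is the vertical concatenation $(D^{i-1}_k; D^{i-1}_k; D^{i-1}_k)$ of three copies of $D^{i-1}_k$. Applying this recursion $N-1$ times gives $D^1_N,\ldots,D^N_N$. A permutation matrix is a matrix whose rows are the rows of the identity matrix in some order. *)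

theory Defs
  imports Complex_Main
begin

text \<open>Semi-lexicographic perturbation columns. semilex N i is the column D^i_N
  (1-based index i, 1 \<le> i \<le> N), a real vector of length 3^N, represented as a list.
  semilex 0 i = [] is a base that makes semilex (Suc 0) 1 = [-1,-1,2] = D^1_1.\<close>
fun semilex :: "nat \<Rightarrow> nat \<Rightarrow> real list" where
  "semilex 0 i = []"
| "semilex (Suc k) i =
     (if i = 1 then replicate (2 * 3 ^ k) (-1) @ replicate (3 ^ k) 2
      else semilex k (i - 1) @ semilex k (i - 1) @ semilex k (i - 1))"

definition dotl :: "real list \<Rightarrow> real list \<Rightarrow> real" where
  "dotl u v = sum_list (map2 (*) u v)"

definition is_perm_matrix :: "nat \<Rightarrow> (nat \<Rightarrow> nat \<Rightarrow> real) \<Rightarrow> bool" where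
  "is_perm_matrix N P \<longleftrightarrow>
     (\<exists>\<sigma>. bij_betw \<sigma> {..<N} {..<N} \<and>
          (\<forall>r<N. \<forall>c<N. P r c = (if c = \<sigma> r then 1 else 0)))"

end

theory Submission
  imports Defs
begin

text \<open>Every column D^i_k has zero sum. At level k+1 the first column is constant on each of the
  three blocks of length 3^k, while every other column repeats one level-k column on each block.
  Hence the first column is orthogonal to all others, and the Gram matrix of the remaining
  columns is 3 times the level-k Gram matrix, which gives 2 * 3^N on the diagonal by induction.
  For a permutation matrix the product P r i * P r j is 1 exactly when sigma r = i = j, and
  reindexing the sum by sigma leaves a single such term.\<close>

lemma length_semilex: "1 \<le> i \<Longrightarrow> i \<le> k \<Longrightarrow> length (semilex k i) = 3 ^ k"
  by (induction k arbitrary: i) auto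

lemma sum_list_semilex: "1 \<le> i \<Longrightarrow> i \<le> k \<Longrightarrow> sum_list (semilex k i) = 0"
  by (induction k arbitrary: i) (auto simp: sum_list_replicate)

lemma semilex_Suc_first:
  "semilex (Suc k) 1 = replicate (3 ^ k) (-1) @ replicate (3 ^ k) (-1) @ replicate (3 ^ k) 2"
  by (simp add: mult_2 replicate_add)

lemma dotl_append: "length a = length c \<Longrightarrow> dotl (a @ b) (c @ d) = dotl a c + dotl b d"
  by (simp add: dotl_def)

lemma dotl_triple: "length a = length b \<Longrightarrow> dotl (a @ a @ a) (b @ b @ b) = 3 * dotl a b"
  by (simp add: dotl_append)

lemma dotl_commute: "dotl u v = dotl v u"
proof (induction u arbitrary: v)
  case Nil then show ?case by (simp add: dotl_def)
next
  case (Cons a u) then show ?case by (cases v) (auto simp: dotl_def mult.commute)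
qed

lemma dotl_replicate: "length v = n \<Longrightarrow> dotl (replicate n x) v = x * sum_list v"
proof (induction v arbitrary: n)
  case Nil then show ?case by (simp add: dotl_def)
next
  case (Cons a v) then show ?case by (cases n) (auto simp: dotl_def algebra_simps)
qed

lemma dotl_semilex_first_other:
  assumes "2 \<le> m" "m \<le> Suc k"
  shows "dotl (semilex (Suc k) 1) (semilex (Suc k) m) = 0"
proof -
  let ?a = "semilex k (m - 1)"
  have "length ?a = 3 ^ k" "sum_list ?a = 0"
    using assms length_semilex sum_list_semilex by auto
  moreover have "semilex (Suc k) m = ?a @ ?a @ ?a"
    using assms by simp
  ultimately show ?thesis
    unfolding semilex_Suc_first by (simp add: dotl_append dotl_replicate)
qed

lemma dotl_semilex_first_first: "dotl (semilex (Suc k) 1) (semilex (Suc k) 1) = 2 * 3 ^ Suc k"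
  unfolding semilex_Suc_first by (simp add: dotl_append dotl_replicate sum_list_replicate)

lemma semilex_orthogonal:
  assumes "i \<in> {1..k}" "j \<in> {1..k}"
  shows "dotl (semilex k i) (semilex k j) = (if i = j then 2 * 3 ^ k else 0)"
  using assms
proof (induction k arbitrary: i j)
  case 0 then show ?case by simp
next
  case (Suc k)
  consider "i = 1" "j = 1" | "i = 1" "j \<noteq> 1" | "i \<noteq> 1" "j = 1" | "i \<noteq> 1" "j \<noteq> 1"
    by blast
  then show ?case
  proof cases
    case 1 then show ?thesis using dotl_semilex_first_first[of k] by simp
  next
    case 2 then show ?thesis using Suc.prems dotl_semilex_first_other[of j k] by simp
  next
    case 3 then show ?thesis using Suc.prems dotl_semilex_first_other[of i k] dotl_commute by simp
  next
    case 4
    then have "i - 1 \<in> {1..k}" "j - 1 \<in> {1..k}" "i - 1 = j - 1 \<longleftrightarrow> i = j"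
      using Suc.prems by auto
    moreover have "dotl (semilex (Suc k) i) (semilex (Suc k) j)
        = 3 * dotl (semilex k (i - 1)) (semilex k (j - 1))"
      using 4 \<open>i - 1 \<in> {1..k}\<close> \<open>j - 1 \<in> {1..k}\<close> by (simp add: dotl_triple length_semilex)
    ultimately show ?thesis using Suc.IH by simp
  qed
qed

lemma perm_matrix_orthonormal_columns:
  assumes "is_perm_matrix N P" "i < N" "j < N"
  shows "(\<Sum>r<N. P r i * P r j) = (if i = j then 1 else 0)"
proof -
  obtain \<sigma> where \<sigma>: "bij_betw \<sigma> {..<N} {..<N}"
    and P: "\<forall>r<N. \<forall>c<N. P r c = (if c = \<sigma> r then 1 else 0)"
    using assms(1) unfolding is_perm_matrix_def by blast
  let ?\<delta> = "\<lambda>s. if s = i then (if i = j then 1 else 0) else (0::real)"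
  have "(\<Sum>r<N. P r i * P r j) = (\<Sum>r<N. ?\<delta> (\<sigma> r))"
    using P assms(2,3) by (intro sum.cong) auto
  also have "\<dots> = (\<Sum>s<N. ?\<delta> s)"
    using sum.reindex_bij_betw[OF \<sigma>] .
  also have "\<dots> = (if i = j then 1 else 0)"
    using assms(2) by simp
  finally show ?thesis .
qed

theorem lemma1:
  fixes N :: nat and P :: "nat \<Rightarrow> nat \<Rightarrow> real"
  assumes "N \<ge> 1"
  shows "(\<forall>i\<in>{1..N}. \<forall>j\<in>{1..N}.
            dotl (semilex N i) (semilex N j) = (if i = j then 2 * 3 ^ N else 0))
         \<and> (is_perm_matrix N P \<longrightarrow>
            (\<forall>i<N. \<forall>j<N. (\<Sum>r<N. P r i * P r j) = (if i = j then 1 else 0)))"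
  using semilex_orthogonal perm_matrix_orthonormal_columns by blast

end
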